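(* Let $(\mathcal{C},\mathsf{I},\otimes,\lambda,\rho,\alpha)$ be a left-skew monoidal category, let $(T,\eta,\mu)$ be a monoid in it, and let $(\mathcal{E},\mathcal{M})$ be an orthogonal factorization system on $\mathcal{C}$ such that $\mathcal{E}$ is closed under $(-)\otimes S$ for every object $(S,s)$ of $\mathcal{M}/T$ (i.e. $e\otimes S\in\mathcal{E}$ whenever $e\in\mathcal{E}$). Then $(\mathcal{M}/T, \mathsf{J}, \boxdot, \ell, r, a)$, as defined in the context, is a left-skew monoidal category. If $\lambda$ is a natural isomorphism (the skew monoidal category $\mathcal{C}$ is left-normal), then so is $\ell$. If moreover $\mathcal{E}$ is also closed under $S\otimes(-)$ for every object $(S,s)$ of $\mathcal{M}/T$ and $(\mathcal{C},\mathsf{I},\otimes,\lambda,\rho,\alpha)$ is monoidal (i.e. $\lambda,\rho,\alpha$ are all isomorphisms), then $(\mathcal{M}/T,\mathsf{J},\boxdot,\ell,r,a)$ is monoidal.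
   Context: A left-skew monoidal category consists of a category $\mathcal{C}$, an object $\mathsf{I}$, a functor $\otimes:\mathcal{C}\times\mathcal{C}\to\mathcal{C}$ and natural transformations (not necessarily invertible) $\lambda_X:\mathsf{I}\otimes X\to X$, $\rho_X : X\to X\otimes \mathsf{I}$, $\alpha_{X,Y,Z}:(X\otimes Y)\otimes Z\to X\otimes(Y\otimes Z)$ satisfying: $\lambda_{\mathsf{I}}\circ\rho_{\mathsf{I}} = \mathrm{id}$; $(X\otimes\lambda_Y)\circ\alpha_{X,\mathsf{I},Y}\circ(\rho_X\otimes Y) = \mathrm{id}$; $\lambda_{X\otimes Y}\circ\alpha_{\mathsf{I},X,Y} = \lambda_X\otimes Y$; $\alpha_{X,Y,\mathsf{I}}\circ\rho_{X\otimes Y} = X\otimes\rho_Y$; $(X\otimes\alpha_{Y,Z,W})\circ\alpha_{X,Y\otimes Z,W}\circ(\alpha_{X,Y,Z}\otimes W) = \alpha_{X,Y,Z\otimes W}\circ\alpha_{X\otimes Y,Z,W}$. It is monoidal if $\lambda,\rho,\alpha$ are all isomorphisms. A monoid is $(T,\eta:\mathsf{I}\to T,\mu:T\otimes T\to T)$ with $\mu\circ(\eta\otimes T) = \lambda_T$, $\mu\circ(T\otimes\eta)\circ\rho_T = \mathrm{id}_T$, $\mu\circ(\mu\otimes T) = \mu\circ(T\otimes\mu)\circ\alpha_{T,T,T}$. An orthogonal factorization system $(\mathcal{E},\mathcal{M})$ on $\mathcal{C}$: both classes contain all isomorphisms and are closed under composition; for every commuting square $g\circ e = m\circ f$ with $e\in\mathcal{E}$,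 $m\in\mathcal{M}$ there is a unique $d$ with $d\circ e = f$ and $m\circ d = g$; every morphism factors as $m\circ e$ with $e\in\mathcal{E}$, $m\in\mathcal{M}$. $\mathcal{M}/T$ is the category with objects $(S,s)$, $s:S\to T$ in $\mathcal{M}$, and morphisms $f:(S,s)\to(S',s')$ the $f:S\to S'$ with $s'\circ f = s$. Structure on $\mathcal{M}/T$: factor $\eta = j\circ q$ with $q:\mathsf{I}\to\mathsf{J}$ in $\mathcal{E}$, $j:\mathsf{J}\to T$ in $\mathcal{M}$; the unit is $(\mathsf{J},j)$. For objects $(S,s),(S',s')$ factor $\mu\circ(s\otimes s') = (s\boxdot s')\circ q_{S,S'}$ with $q_{S,S'}:S\otimes S'\to S\boxdot S'$ in $\mathcal{E}$, $s\boxdot s'$ in $\mathcal{M}$; the tensor is $(S\boxdot S', s\boxdot s')$. For morphisms $f:(S_1,s_1)\to(S_2,s_2)$, $f':(S'_1,s'_1)\to(S'_2,s'_2)$, $f\boxdot f'$ is the unique morphism with $(f\boxdot f')\circ q_{S_1,S'_1} = q_{S_2,S'_2}\circ(f\otimes f')$ and $(s_2\boxdot s'_2)\circ(f\boxdot f') = s_1\boxdot s'_1$. The left unitor $\ell_S : \mathsf{J}\boxdot S\to S$ is the unique morphism with $\ell_S\circ q_{\mathsf{J},S}\circ(q\otimes S) = \lambda_S$ and $s\circ\ell_S = j\boxdot s$. The right unitor is $r_S = q_{S,\mathsf{J}}\circ(S\otimes q)\circ\rho_S : S\to S\boxdot\mathsf{J}$. The associator $a_{S,S',S''} : (S\boxdot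 S')\boxdot S''\to S\boxdot(S'\boxdot S'')$ is the unique morphism with $a\circ q_{S\boxdot S',S''}\circ(q_{S,S'}\otimes S'') = q_{S,S'\boxdot S''}\circ(S\otimes q_{S',S''})\circ\alpha_{S,S',S''}$ and $(s\boxdot(s'\boxdot s''))\circ a = (s\boxdot s')\boxdot s''$. (These diagonals exist and are unique by orthogonality, using closure of $\mathcal{E}$ under $(-)\otimes S$.) *)

theory Defs
  imports Main
begin

record ('o, 'a) cat =
  Obj  :: "'o set"
  Arr  :: "'a set"
  Dom  :: "'a \<Rightarrow> 'o"
  Cod  :: "'a \<Rightarrow> 'o"
  Idn  :: "'o \<Rightarrow> 'a"
  Cmp  :: "'a \<Rightarrow> 'a \<Rightarrow> 'a"   (* Cmp C g f = g \<circ> f *)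

definition hom :: "('o, 'a) cat \<Rightarrow> 'o \<Rightarrow> 'o \<Rightarrow> 'a set" where
  "hom C A B = {f \<in> Arr C. Dom C f = A \<and> Cod C f = B}"

definition category :: "('o, 'a) cat \<Rightarrow> bool" where
  "category C \<longleftrightarrow>
     (\<forall>f\<in>Arr C. Dom C f \<in> Obj C \<and> Cod C f \<in> Obj C) \<and>
     (\<forall>A\<in>Obj C. Idn C A \<in> hom C A A) \<and>
     (\<forall>f\<in>Arr C. \<forall>g\<in>Arr C. Cod C f = Dom C g \<longrightarrow>
         Cmp C g f \<in> hom C (Dom C f) (Cod C g)) \<and>
     (\<forall>f\<in>Arr C. Cmp C (Idn C (Cod C f)) f = f \<and> Cmp C f (Idn C (Dom C f)) = f) \<and>
     (\<forall>f\<in>Arr C. \<forall>g\<in>Arr C. \<forall>h\<in>Arr C. Cod C f = Dom C g \<longrightarrow> Cod C g = Dom C h \<longrightarrow>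
         Cmp C h (Cmp C g f) = Cmp C (Cmp C h g) f)"

definition iso :: "('o, 'a) cat \<Rightarrow> 'a \<Rightarrow> bool" where
  "iso C f \<longleftrightarrow> f \<in> Arr C \<and>
     (\<exists>g\<in>hom C (Cod C f) (Dom C f). Cmp C g f = Idn C (Dom C f) \<and> Cmp C f g = Idn C (Cod C f))"

record ('o, 'a) skew =
  UnO  :: "'o"
  TO  :: "'o \<Rightarrow> 'o \<Rightarrow> 'o"
  TA  :: "'a \<Rightarrow> 'a \<Rightarrow> 'a"
  Lam :: "'o \<Rightarrow> 'a"
  Rho :: "'o \<Rightarrow> 'a"
  Alp :: "'o \<Rightarrow> 'o \<Rightarrow> 'o \<Rightarrow> 'a"

definition left_skew_monoidal :: "('o, 'a) cat \<Rightarrow> ('o, 'a) skew \<Rightarrow> bool" where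
  "left_skew_monoidal C K \<longleftrightarrow>
     category C \<and> UnO K \<in> Obj C \<and>
     (\<forall>X\<in>Obj C. \<forall>Y\<in>Obj C. TO K X Y \<in> Obj C) \<and>
     (\<forall>f\<in>Arr C. \<forall>g\<in>Arr C. TA K f g \<in> hom C (TO K (Dom C f) (Dom C g)) (TO K (Cod C f) (Cod C g))) \<and>
     (\<forall>X\<in>Obj C. \<forall>Y\<in>Obj C. TA K (Idn C X) (Idn C Y) = Idn C (TO K X Y)) \<and>
     (\<forall>f\<in>Arr C. \<forall>f'\<in>Arr C. \<forall>g\<in>Arr C. \<forall>g'\<in>Arr C.
        Cod C f = Dom C f' \<longrightarrow> Cod C g = Dom C g' \<longrightarrow>
        TA K (Cmp C f' f) (Cmp C g' g) = Cmp C (TA K f' g') (TA K f g)) \<and>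
     (\<forall>X\<in>Obj C. Lam K X \<in> hom C (TO K (UnO K) X) X) \<and>
     (\<forall>X\<in>Obj C. Rho K X \<in> hom C X (TO K X (UnO K))) \<and>
     (\<forall>X\<in>Obj C. \<forall>Y\<in>Obj C. \<forall>Z\<in>Obj C.
        Alp K X Y Z \<in> hom C (TO K (TO K X Y) Z) (TO K X (TO K Y Z))) \<and>
     (\<forall>f\<in>Arr C. Cmp C f (Lam K (Dom C f)) = Cmp C (Lam K (Cod C f)) (TA K (Idn C (UnO K)) f)) \<and>
     (\<forall>f\<in>Arr C. Cmp C (Rho K (Cod C f)) f = Cmp C (TA K f (Idn C (UnO K))) (Rho K (Dom C f))) \<and>
     (\<forall>f\<in>Arr C. \<forall>g\<in>Arr C. \<forall>h\<in>Arr C.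
        Cmp C (Alp K (Cod C f) (Cod C g) (Cod C h)) (TA K (TA K f g) h) =
        Cmp C (TA K f (TA K g h)) (Alp K (Dom C f) (Dom C g) (Dom C h))) \<and>
     Cmp C (Lam K (UnO K)) (Rho K (UnO K)) = Idn C (UnO K) \<and>
     (\<forall>X\<in>Obj C. \<forall>Y\<in>Obj C.
        Cmp C (TA K (Idn C X) (Lam K Y)) (Cmp C (Alp K X (UnO K) Y) (TA K (Rho K X) (Idn C Y)))
          = Idn C (TO K X Y)) \<and>
     (\<forall>X\<in>Obj C. \<forall>Y\<in>Obj C.
        Cmp C (Lam K (TO K X Y)) (Alp K (UnO K) X Y) = TA K (Lam K X) (Idn C Y)) \<and>
     (\<forall>X\<in>Obj C. \<forall>Y\<in>Obj C.
        Cmp C (Alp K X Y (UnO K)) (Rho K (TO K X Y)) = TA K (Idn C X) (Rho K Y)) \<and>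
     (\<forall>X\<in>Obj C. \<forall>Y\<in>Obj C. \<forall>Z\<in>Obj C. \<forall>W\<in>Obj C.
        Cmp C (TA K (Idn C X) (Alp K Y Z W))
              (Cmp C (Alp K X (TO K Y Z) W) (TA K (Alp K X Y Z) (Idn C W)))
        = Cmp C (Alp K X Y (TO K Z W)) (Alp K (TO K X Y) Z W))"

definition monoidal :: "('o, 'a) cat \<Rightarrow> ('o, 'a) skew \<Rightarrow> bool" where
  "monoidal C K \<longleftrightarrow> left_skew_monoidal C K \<and>
     (\<forall>X\<in>Obj C. iso C (Lam K X)) \<and> (\<forall>X\<in>Obj C. iso C (Rho K X)) \<and>
     (\<forall>X\<in>Obj C. \<forall>Y\<in>Obj C. \<forall>Z\<in>Obj C. iso C (Alp K X Y Z))"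

definition monoid :: "('o, 'a) cat \<Rightarrow> ('o, 'a) skew \<Rightarrow> 'o \<Rightarrow> 'a \<Rightarrow> 'a \<Rightarrow> bool" where
  "monoid C K T eta mu \<longleftrightarrow>
     T \<in> Obj C \<and> eta \<in> hom C (UnO K) T \<and> mu \<in> hom C (TO K T T) T \<and>
     Cmp C mu (TA K eta (Idn C T)) = Lam K T \<and>
     Cmp C mu (Cmp C (TA K (Idn C T) eta) (Rho K T)) = Idn C T \<and>
     Cmp C mu (TA K mu (Idn C T)) = Cmp C mu (Cmp C (TA K (Idn C T) mu) (Alp K T T T))"

definition ofs :: "('o, 'a) cat \<Rightarrow> 'a set \<Rightarrow> 'a set \<Rightarrow> bool" where
  "ofs C E M \<longleftrightarrow>
     E \<subseteq> Arr C \<and> M \<subseteq> Arr C \<and>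
     (\<forall>f. iso C f \<longrightarrow> f \<in> E \<and> f \<in> M) \<and>
     (\<forall>f\<in>E. \<forall>g\<in>E. Cod C f = Dom C g \<longrightarrow> Cmp C g f \<in> E) \<and>
     (\<forall>f\<in>M. \<forall>g\<in>M. Cod C f = Dom C g \<longrightarrow> Cmp C g f \<in> M) \<and>
     (\<forall>e\<in>E. \<forall>m\<in>M. \<forall>f\<in>Arr C. \<forall>g\<in>Arr C.
        Dom C f = Dom C e \<longrightarrow> Cod C f = Dom C m \<longrightarrow> Dom C g = Cod C e \<longrightarrow> Cod C g = Cod C m \<longrightarrow>
        Cmp C g e = Cmp C m f \<longrightarrow>
        (\<exists>!d. d \<in> hom C (Cod C e) (Dom C m) \<and> Cmp C d e = f \<and> Cmp C m d = g)) \<and>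
     (\<forall>f\<in>Arr C. \<exists>e\<in>E. \<exists>m\<in>M. Cod C e = Dom C m \<and> Cmp C m e = f)"

text \<open>Objects are pairs (S,s) with s : S -> T in M; an arrow (S,s) -> (S',s') is
  represented as the triple ((S,s), f, (S',s')) with f : S -> S' and s' o f = s.\<close>

definition slice :: "('o, 'a) cat \<Rightarrow> 'a set \<Rightarrow> 'o \<Rightarrow>
    ('o \<times> 'a, ('o \<times> 'a) \<times> 'a \<times> ('o \<times> 'a)) cat" where
  "slice C M T =
    (let Ob = {(S, s). S \<in> Obj C \<and> s \<in> M \<and> s \<in> hom C S T} in
     \<lparr> Obj = Ob,
       Arr = {(x, f, y). x \<in> Ob \<and> y \<in> Ob \<and> f \<in> hom C (fst x) (fst y) \<and> Cmp C (snd y) f = snd x},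
       Dom = (\<lambda>F. fst F),
       Cod = (\<lambda>F. snd (snd F)),
       Idn = (\<lambda>x. (x, Idn C (fst x), x)),
       Cmp = (\<lambda>G F. (fst F, Cmp C (fst (snd G)) (fst (snd F)), snd (snd G))) \<rparr>)"

text \<open>The skew monoidal structure on M/T, built from chosen factorizations:
  eta = j o q0 (q0 in E, j in M), and for objects x=(S,s), y=(S',s'):
  mu o (s (x) s') = mS x y o qS x y with qS x y in E, mS x y in M.\<close>

definition slice_skew :: "('o, 'a) cat \<Rightarrow> ('o, 'a) skew \<Rightarrow> 'a \<Rightarrow> 'a \<Rightarrow>
    ('o \<times> 'a \<Rightarrow> 'o \<times> 'a \<Rightarrow> 'a) \<Rightarrow> ('o \<times> 'a \<Rightarrow> 'o \<times> 'a \<Rightarrow> 'a) \<Rightarrow>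
    ('o \<times> 'a, ('o \<times> 'a) \<times> 'a \<times> ('o \<times> 'a)) skew" where
  "slice_skew C K q0 j qS mS =
    (let Jx = (Cod C q0, j);
         box = (\<lambda>x y. (Cod C (qS x y), mS x y))
     in
     \<lparr> UnO = Jx,
       TO = box,
       TA = (\<lambda>F G.
          let x1 = fst F; f = fst (snd F); x2 = snd (snd F);
              y1 = fst G; g = fst (snd G); y2 = snd (snd G)
          in (box x1 y1,
              THE d. d \<in> hom C (fst (box x1 y1)) (fst (box x2 y2)) \<and>
                     Cmp C d (qS x1 y1) = Cmp C (qS x2 y2) (TA K f g) \<and>
                     Cmp C (mS x2 y2) d = mS x1 y1,
              box x2 y2)),
       Lam = (\<lambda>x.
          (box Jx x,
           THE d. d \<in> hom C (fst (box Jx x)) (fst x) \<and>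
                  Cmp C d (Cmp C (qS Jx x) (TA K q0 (Idn C (fst x)))) = Lam K (fst x) \<and>
                  Cmp C (snd x) d = mS Jx x,
           x)),
       Rho = (\<lambda>x.
          (x,
           Cmp C (qS x Jx) (Cmp C (TA K (Idn C (fst x)) q0) (Rho K (fst x))),
           box x Jx)),
       Alp = (\<lambda>x y z.
          (box (box x y) z,
           THE d. d \<in> hom C (fst (box (box x y) z)) (fst (box x (box y z))) \<and>
                  Cmp C d (Cmp C (qS (box x y) z) (TA K (qS x y) (Idn C (fst z)))) =
                    Cmp C (qS x (box y z))
                      (Cmp C (TA K (Idn C (fst x)) (qS y z)) (Alp K (fst x) (fst y) (fst z))) \<and>
                  Cmp C (mS x (box y z)) d = mS (box x y) z,
           box x (box y z))) \<rparr>)"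

end

(*
  The maps f boxdot g, l and a of M/T are unique diagonal fillers of squares whose left side
  lies in E and whose right side is the M-map to T; the left sides are composites of maps
  q_{S,S'} and such maps tensored on the right with identities, hence in E by the closure
  hypothesis.  Therefore an equation between maps of M/T can be checked after precomposing
  with such an E-map and postcomposing with the M-map to T.  Checked in this way, every axiom of a left-skew monoidal
  category for M/T reduces to the same axiom for C, the squares commuting by naturality of
  lambda, rho, alpha and the monoid laws of T.

  For invertibility: the components of l, r and a lie in M, since m' o f in M with m' in M
  forces f in M.  If lambda is invertible, l has a section in E and is therefore invertible.
  If moreover E is closed under S (x) -, the components of r and a lie in E as well (for a
  because e, f o e in E force f in E), and a map in both E and M is invertible.
*)

theory Submission
  imports Defs
begin

section \<open>Categories and slice categories\<close>

locale category_locale =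
  fixes C :: "('o, 'a) cat"
  assumes category: "category C"
begin

abbreviation comp (infixr "\<cdot>" 55) where "g \<cdot> f \<equiv> Cmp C g f"
abbreviation "dm \<equiv> Dom C"
abbreviation "cd \<equiv> Cod C"
abbreviation "idn \<equiv> Idn C"

lemma dom_obj [simp]: "f \<in> Arr C \<Longrightarrow> dm f \<in> Obj C"
  and cod_obj [simp]: "f \<in> Arr C \<Longrightarrow> cd f \<in> Obj C"
  using category unfolding category_def by blast+

lemma idn_arr [simp]: "A \<in> Obj C \<Longrightarrow> idn A \<in> Arr C"
  and idn_dom [simp]: "A \<in> Obj C \<Longrightarrow> dm (idn A) = A"
  and idn_cod [simp]: "A \<in> Obj C \<Longrightarrow> cd (idn A) = A"
  using category unfolding category_def hom_def by blast+

lemma comp_arr [simp]: "f \<in> Arr C \<Longrightarrow> g \<in> Arr C \<Longrightarrow> cd f = dm g \<Longrightarrow> g \<cdot> f \<in> Arr C"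
  and comp_dom [simp]: "f \<in> Arr C \<Longrightarrow> g \<in> Arr C \<Longrightarrow> cd f = dm g \<Longrightarrow> dm (g \<cdot> f) = dm f"
  and comp_cod [simp]: "f \<in> Arr C \<Longrightarrow> g \<in> Arr C \<Longrightarrow> cd f = dm g \<Longrightarrow> cd (g \<cdot> f) = cd g"
  using category unfolding category_def hom_def by blast+

lemma comp_idn_left [simp]: "f \<in> Arr C \<Longrightarrow> cd f = A \<Longrightarrow> idn A \<cdot> f = f"
  and comp_idn_right [simp]: "f \<in> Arr C \<Longrightarrow> dm f = A \<Longrightarrow> f \<cdot> idn A = f"
  using category unfolding category_def by blast+

lemma comp_assoc:
  "f \<in> Arr C \<Longrightarrow> g \<in> Arr C \<Longrightarrow> h \<in> Arr C \<Longrightarrow> cd f = dm g \<Longrightarrow> cd g = dm h \<Longrightarrow>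
   (h \<cdot> g) \<cdot> f = h \<cdot> (g \<cdot> f)"
  using category unfolding category_def by metis

lemma comp_eq_extend:
  "g \<cdot> f = h \<Longrightarrow> f \<in> Arr C \<Longrightarrow> g \<in> Arr C \<Longrightarrow> r \<in> Arr C \<Longrightarrow> cd r = dm f \<Longrightarrow> cd f = dm g \<Longrightarrow>
   g \<cdot> (f \<cdot> r) = h \<cdot> r"
  using comp_assoc by metis

lemma isoI:
  "f \<in> Arr C \<Longrightarrow> g \<in> Arr C \<Longrightarrow> dm g = cd f \<Longrightarrow> cd g = dm f \<Longrightarrow>
   g \<cdot> f = idn (dm f) \<Longrightarrow> f \<cdot> g = idn (cd f) \<Longrightarrow> iso C f"
  unfolding iso_def hom_def by blast

lemma isoE:
  assumes "iso C f"
  obtains g where "g \<in> Arr C" "dm g = cd f" "cd g = dm f"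
    "g \<cdot> f = idn (dm f)" "f \<cdot> g = idn (cd f)"
  using assms unfolding iso_def hom_def by blast

lemma slice_obj_iff:
  "x \<in> Obj (slice C M T) \<longleftrightarrow>
     fst x \<in> Obj C \<and> snd x \<in> M \<and> snd x \<in> Arr C \<and> dm (snd x) = fst x \<and> cd (snd x) = T"
  by (cases x) (auto simp: slice_def hom_def)

lemma slice_arr_iff:
  "(x, f, y) \<in> Arr (slice C M T) \<longleftrightarrow>
     x \<in> Obj (slice C M T) \<and> y \<in> Obj (slice C M T) \<and>
     f \<in> Arr C \<and> dm f = fst x \<and> cd f = fst y \<and> snd y \<cdot> f = snd x"
  by (auto simp: slice_def hom_def Let_def)

lemma slice_simps [simp]:
  "Dom (slice C M T) F = fst F"
  "Cod (slice C M T) F = snd (snd F)"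
  "Idn (slice C M T) x = (x, idn (fst x), x)"
  "Cmp (slice C M T) G F = (fst F, fst (snd G) \<cdot> fst (snd F), snd (snd G))"
  by (simp_all add: slice_def Let_def)

lemma ball_slice_arr:
  "(\<forall>F\<in>Arr (slice C M T). P F) \<longleftrightarrow> (\<forall>x f y. (x, f, y) \<in> Arr (slice C M T) \<longrightarrow> P (x, f, y))"
  by auto

lemma slice_comp_arr:
  assumes F: "(x, f, y) \<in> Arr (slice C M T)" and G: "(y, g, z) \<in> Arr (slice C M T)"
  shows "(x, g \<cdot> f, z) \<in> Arr (slice C M T)"
proof -
  have "(snd z \<cdot> g) \<cdot> f = snd z \<cdot> (g \<cdot> f)"
    by (rule comp_assoc) (use F G in \<open>simp_all add: slice_arr_iff slice_obj_iff\<close>)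
  then show ?thesis
    using F G by (simp add: slice_arr_iff)
qed

lemma category_slice: "category (slice C M T)"
  unfolding category_def hom_def ball_slice_arr
proof (intro conjI allI ballI impI)
  fix x f y x' g y' x'' h y''
  assume F: "(x, f, y) \<in> Arr (slice C M T)" and G: "(x', g, y') \<in> Arr (slice C M T)"
    and H: "(x'', h, y'') \<in> Arr (slice C M T)"
    and "Cod (slice C M T) (x, f, y) = Dom (slice C M T) (x', g, y')"
    and "Cod (slice C M T) (x', g, y') = Dom (slice C M T) (x'', h, y'')"
  then have "x' = y" "x'' = y'" by simp_all
  then show "Cmp (slice C M T) (x'', h, y'') (Cmp (slice C M T) (x', g, y') (x, f, y)) =
      Cmp (slice C M T) (Cmp (slice C M T) (x'', h, y'') (x', g, y')) (x, f, y)"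
    using F G H by (simp add: slice_arr_iff comp_assoc)
next
  fix x f y x' g y'
  assume "(x, f, y) \<in> Arr (slice C M T)" "(x', g, y') \<in> Arr (slice C M T)"
    and "Cod (slice C M T) (x, f, y) = Dom (slice C M T) (x', g, y')"
  then show "Cmp (slice C M T) (x', g, y') (x, f, y) \<in> {F \<in> Arr (slice C M T).
      Dom (slice C M T) F = Dom (slice C M T) (x, f, y) \<and> Cod (slice C M T) F = Cod (slice C M T) (x', g, y')}"
    using slice_comp_arr by auto
qed (simp_all add: slice_arr_iff slice_obj_iff)

lemma iso_slice:
  assumes F: "(x, f, y) \<in> Arr (slice C M T)" and "iso C f"
  shows "iso (slice C M T) (x, f, y)"
proof -
  obtain g where g: "g \<in> Arr C" "dm g = cd f" "cd g = dm f" "g \<cdot> f = idn (dm f)" "f \<cdot> g = idn (cd f)"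
    using isoE[OF \<open>iso C f\<close>] .
  have "(snd y \<cdot> f) \<cdot> g = snd y \<cdot> (f \<cdot> g)"
    by (rule comp_assoc) (use F g in \<open>simp_all add: slice_arr_iff slice_obj_iff\<close>)
  then have "(y, g, x) \<in> Arr (slice C M T)"
    using F g by (simp add: slice_arr_iff slice_obj_iff)
  then have "(y, g, x) \<in> hom (slice C M T) y x"
    by (simp add: hom_def)
  with F g show ?thesis
    unfolding iso_def by (intro conjI bexI[of _ "(y, g, x)"]) (simp_all add: slice_arr_iff)
qed

end

section \<open>Orthogonal factorization systems\<close>

locale ofs_category = category_locale C for C :: "('o, 'a) cat" +
  fixes E M :: "'a set"
  assumes ofs: "ofs C E M"
begin

lemma E_arr [simp]: "e \<in> E \<Longrightarrow> e \<in> Arr C"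
  and M_arr [simp]: "m \<in> M \<Longrightarrow> m \<in> Arr C"
  and iso_in_E: "iso C f \<Longrightarrow> f \<in> E"
  and iso_in_M: "iso C f \<Longrightarrow> f \<in> M"
  and E_comp [simp]: "e \<in> E \<Longrightarrow> e' \<in> E \<Longrightarrow> cd e = dm e' \<Longrightarrow> e' \<cdot> e \<in> E"
  and M_comp [simp]: "m \<in> M \<Longrightarrow> m' \<in> M \<Longrightarrow> cd m = dm m' \<Longrightarrow> m' \<cdot> m \<in> M"
  using ofs unfolding ofs_def by blast+

lemma factorization:
  assumes "f \<in> Arr C"
  obtains e m where "e \<in> E" "m \<in> M" "cd e = dm m" "m \<cdot> e = f"
  using ofs assms unfolding ofs_def by blast

lemma unique_diagonal:
  assumes "e \<in> E" "m \<in> M" "f \<in> Arr C" "g \<in> Arr C"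
    "dm f = dm e" "cd f = dm m" "dm g = cd e" "cd g = cd m" "g \<cdot> e = m \<cdot> f"
  shows "\<exists>!d. d \<in> hom C (cd e) (dm m) \<and> d \<cdot> e = f \<and> m \<cdot> d = g"
  using ofs assms unfolding ofs_def by blast

definition diag :: "'a \<Rightarrow> 'a \<Rightarrow> 'a \<Rightarrow> 'a \<Rightarrow> 'a" where
  "diag e m f g = (THE d. d \<in> hom C (cd e) (dm m) \<and> d \<cdot> e = f \<and> m \<cdot> d = g)"

context
  fixes e m f g
  assumes square: "e \<in> E" "m \<in> M" "f \<in> Arr C" "g \<in> Arr C"
    "dm f = dm e" "cd f = dm m" "dm g = cd e" "cd g = cd m" "g \<cdot> e = m \<cdot> f"
begin

lemma diag_arr: "diag e m f g \<in> Arr C"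
  and diag_dom: "dm (diag e m f g) = cd e"
  and diag_cod: "cd (diag e m f g) = dm m"
  and diag_comp_E: "diag e m f g \<cdot> e = f"
  and M_comp_diag: "m \<cdot> diag e m f g = g"
  using theI'[OF unique_diagonal[OF square]] unfolding diag_def hom_def by blast+

lemma diag_unique:
  "d \<in> Arr C \<Longrightarrow> dm d = cd e \<Longrightarrow> cd d = dm m \<Longrightarrow> d \<cdot> e = f \<Longrightarrow> m \<cdot> d = g \<Longrightarrow> diag e m f g = d"
  unfolding diag_def by (rule the1_equality[OF unique_diagonal[OF square]]) (simp add: hom_def)

end

lemmas diag_props = diag_arr diag_dom diag_cod diag_comp_E M_comp_diag

lemma E_M_cancel:
  assumes "e \<in> E" "m \<in> M"
    and "d \<in> Arr C" "dm d = cd e" "cd d = dm m" "d' \<in> Arr C" "dm d' = cd e" "cd d' = dm m"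
    and "d \<cdot> e = d' \<cdot> e" "m \<cdot> d = m \<cdot> d'"
  shows "d = d'"
proof -
  have assoc: "(m \<cdot> d) \<cdot> e = m \<cdot> (d \<cdot> e)"
    by (rule comp_assoc) (use assms in simp_all)
  have "diag e m (d \<cdot> e) (m \<cdot> d) = d"
    by (rule diag_unique) (use assms assoc in simp_all)
  moreover have "diag e m (d \<cdot> e) (m \<cdot> d) = d'"
    by (rule diag_unique) (use assms assoc in simp_all)
  ultimately show ?thesis
    by simp
qed

lemma iso_if_E_M:
  assumes "e \<in> E" "e \<in> M"
  shows "iso C e"
  using assms diag_props[of e e "idn (dm e)" "idn (cd e)"]
  by (intro isoI[of e "diag e e (idn (dm e)) (idn (cd e))"]) simp_all

lemma M_iso_if_E_section:
  assumes "e \<in> E" "m \<in> M" "cd e = dm m" "m \<cdot> e = idn (dm e)"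
  shows "iso C m"
proof -
  have cod_m: "cd m = dm e"
    using comp_cod[of e m] assms by simp
  have "(e \<cdot> m) \<cdot> e = e \<cdot> (m \<cdot> e)"
    by (rule comp_assoc) (use assms cod_m in simp_all)
  moreover have "m \<cdot> (e \<cdot> m) = (m \<cdot> e) \<cdot> m"
    by (rule comp_assoc[symmetric]) (use assms cod_m in simp_all)
  ultimately have assoc: "(e \<cdot> m) \<cdot> e = e" "m \<cdot> (e \<cdot> m) = m"
    using assms cod_m by simp_all
  have "e \<cdot> m = idn (cd e)"
    by (rule E_M_cancel[OF assms(1,2)]) (use assms cod_m assoc in simp_all)
  with assms cod_m show ?thesis
    by (intro isoI[of m e]) simp_all
qed

lemma M_right_cancel:
  assumes "m' \<in> M" "m \<in> M" "f \<in> Arr C" "cd f = dm m'" "m' \<cdot> f = m"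
  shows "f \<in> M"
proof -
  obtain e1 m1 where f: "e1 \<in> E" "m1 \<in> M" "cd e1 = dm m1" "m1 \<cdot> e1 = f"
    using factorization[OF assms(3)] .
  have dims: "dm e1 = dm f" "cd m1 = cd f" "dm m = dm f" "cd m = cd m'"
    using comp_dom[of e1 m1] comp_cod[of e1 m1] f comp_dom[of f m'] comp_cod[of f m'] assms
    by auto
  have sq: "(m' \<cdot> m1) \<cdot> e1 = m \<cdot> idn (dm e1)"
    using comp_assoc[of e1 m1 m'] assms f dims by simp
  define r where "r = diag e1 m (idn (dm e1)) (m' \<cdot> m1)"
  have r: "r \<in> Arr C" "dm r = cd e1" "cd r = dm e1" "r \<cdot> e1 = idn (dm e1)" "m \<cdot> r = m' \<cdot> m1"
    unfolding r_def using diag_props[of e1 m "idn (dm e1)" "m' \<cdot> m1"] assms f dims sq by simp_all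
  have idempotent: "(e1 \<cdot> r) \<cdot> e1 = e1" "(m' \<cdot> m1) \<cdot> (e1 \<cdot> r) = m' \<cdot> m1"
    using comp_assoc[of e1 r e1] comp_assoc[of r e1 "m' \<cdot> m1"] sq assms f r dims by simp_all
  have "e1 \<cdot> r = idn (cd e1)"
    by (rule E_M_cancel[of e1 "m' \<cdot> m1"]) (use assms f r dims idempotent in simp_all)
  with f r have "iso C e1"
    by (intro isoI[of e1 r]) simp_all
  with f show ?thesis
    by (metis iso_in_M M_comp)
qed

lemma E_left_cancel:
  assumes "e \<in> E" "f \<in> Arr C" "cd e = dm f" "f \<cdot> e \<in> E"
  shows "f \<in> E"
proof -
  obtain e1 m1 where f: "e1 \<in> E" "m1 \<in> M" "cd e1 = dm m1" "m1 \<cdot> e1 = f"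
    using factorization[OF assms(2)] .
  have dims: "dm e1 = dm f" "cd m1 = cd f"
    using comp_dom[of e1 m1] comp_cod[of e1 m1] f by auto
  have sq: "idn (cd f) \<cdot> (f \<cdot> e) = m1 \<cdot> (e1 \<cdot> e)"
    using comp_assoc[of e e1 m1] assms f dims by simp
  define s where "s = diag (f \<cdot> e) m1 (e1 \<cdot> e) (idn (cd f))"
  have s: "s \<in> Arr C" "dm s = cd f" "cd s = dm m1" "s \<cdot> (f \<cdot> e) = e1 \<cdot> e" "m1 \<cdot> s = idn (cd f)"
    unfolding s_def using diag_props[of "f \<cdot> e" m1 "e1 \<cdot> e" "idn (cd f)"] assms f dims sq by simp_all
  have idempotent: "(s \<cdot> m1) \<cdot> (e1 \<cdot> e) = e1 \<cdot> e" "m1 \<cdot> (s \<cdot> m1) = m1"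
    using comp_assoc[of "e1 \<cdot> e" m1 s] comp_assoc[of e e1 m1] comp_assoc[of m1 s m1] assms f s dims
    by simp_all
  have "s \<cdot> m1 = idn (dm m1)"
    by (rule E_M_cancel[of "e1 \<cdot> e" m1]) (use assms f s dims idempotent in simp_all)
  with f s dims have "iso C m1"
    by (intro isoI[of m1 s]) simp_all
  with f show ?thesis
    by (metis iso_in_E E_comp)
qed

end

section \<open>Left-skew monoidal categories\<close>

locale skew_monoidal_category =
  fixes C :: "('o, 'a) cat" and K :: "('o, 'a) skew"
  assumes skew: "left_skew_monoidal C K"

sublocale skew_monoidal_category \<subseteq> category_locale C
  using skew by unfold_locales (simp add: left_skew_monoidal_def)

context skew_monoidal_category
begin

abbreviation tensor (infixr "\<otimes>" 70) where "f \<otimes> g \<equiv> TA K f g"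
abbreviation "U \<equiv> UnO K"
abbreviation "tO \<equiv> TO K"
abbreviation "lam \<equiv> Lam K"
abbreviation "rho \<equiv> Rho K"
abbreviation "alp \<equiv> Alp K"

lemma unit_obj [simp]: "U \<in> Obj C"
  and tensor_obj [simp]: "X \<in> Obj C \<Longrightarrow> Y \<in> Obj C \<Longrightarrow> tO X Y \<in> Obj C"
  using skew by (simp_all add: left_skew_monoidal_def)

lemma tensor_arr [simp]: "f \<in> Arr C \<Longrightarrow> g \<in> Arr C \<Longrightarrow> f \<otimes> g \<in> Arr C"
  and tensor_dom [simp]: "f \<in> Arr C \<Longrightarrow> g \<in> Arr C \<Longrightarrow> dm (f \<otimes> g) = tO (dm f) (dm g)"
  and tensor_cod [simp]: "f \<in> Arr C \<Longrightarrow> g \<in> Arr C \<Longrightarrow> cd (f \<otimes> g) = tO (cd f) (cd g)"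
  using skew by (simp_all add: left_skew_monoidal_def hom_def)

lemma tensor_idn [simp]: "X \<in> Obj C \<Longrightarrow> Y \<in> Obj C \<Longrightarrow> idn X \<otimes> idn Y = idn (tO X Y)"
  using skew by (simp add: left_skew_monoidal_def)

lemma tensor_comp:
  "f \<in> Arr C \<Longrightarrow> f' \<in> Arr C \<Longrightarrow> g \<in> Arr C \<Longrightarrow> g' \<in> Arr C \<Longrightarrow> cd f = dm f' \<Longrightarrow> cd g = dm g' \<Longrightarrow>
   (f' \<otimes> g') \<cdot> (f \<otimes> g) = (f' \<cdot> f) \<otimes> (g' \<cdot> g)"
  using skew by (simp add: left_skew_monoidal_def)

lemma tensor_comp_extend:
  "f \<in> Arr C \<Longrightarrow> f' \<in> Arr C \<Longrightarrow> g \<in> Arr C \<Longrightarrow> g' \<in> Arr C \<Longrightarrow> cd f = dm f' \<Longrightarrow> cd g = dm g' \<Longrightarrow>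
   r \<in> Arr C \<Longrightarrow> cd r = tO (dm f) (dm g) \<Longrightarrow>
   (f' \<otimes> g') \<cdot> ((f \<otimes> g) \<cdot> r) = ((f' \<cdot> f) \<otimes> (g' \<cdot> g)) \<cdot> r"
  by (simp add: tensor_comp comp_assoc[symmetric])

lemmas comp_normalize = comp_assoc tensor_comp tensor_comp_extend

lemma lam_arr [simp]: "X \<in> Obj C \<Longrightarrow> lam X \<in> Arr C"
  and lam_dom [simp]: "X \<in> Obj C \<Longrightarrow> dm (lam X) = tO U X"
  and lam_cod [simp]: "X \<in> Obj C \<Longrightarrow> cd (lam X) = X"
  and rho_arr [simp]: "X \<in> Obj C \<Longrightarrow> rho X \<in> Arr C"
  and rho_dom [simp]: "X \<in> Obj C \<Longrightarrow> dm (rho X) = X"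
  and rho_cod [simp]: "X \<in> Obj C \<Longrightarrow> cd (rho X) = tO X U"
  using skew by (simp_all add: left_skew_monoidal_def hom_def)

lemma alp_arr [simp]: "X \<in> Obj C \<Longrightarrow> Y \<in> Obj C \<Longrightarrow> Z \<in> Obj C \<Longrightarrow> alp X Y Z \<in> Arr C"
  and alp_dom [simp]: "X \<in> Obj C \<Longrightarrow> Y \<in> Obj C \<Longrightarrow> Z \<in> Obj C \<Longrightarrow> dm (alp X Y Z) = tO (tO X Y) Z"
  and alp_cod [simp]: "X \<in> Obj C \<Longrightarrow> Y \<in> Obj C \<Longrightarrow> Z \<in> Obj C \<Longrightarrow> cd (alp X Y Z) = tO X (tO Y Z)"
  using skew by (simp_all add: left_skew_monoidal_def hom_def)

lemma lam_natural: "f \<in> Arr C \<Longrightarrow> f \<cdot> lam (dm f) = lam (cd f) \<cdot> (idn U \<otimes> f)"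
  and rho_natural: "f \<in> Arr C \<Longrightarrow> rho (cd f) \<cdot> f = (f \<otimes> idn U) \<cdot> rho (dm f)"
  using skew by (simp_all add: left_skew_monoidal_def)

lemma alp_natural:
  "f \<in> Arr C \<Longrightarrow> g \<in> Arr C \<Longrightarrow> h \<in> Arr C \<Longrightarrow>
   alp (cd f) (cd g) (cd h) \<cdot> ((f \<otimes> g) \<otimes> h) = (f \<otimes> (g \<otimes> h)) \<cdot> alp (dm f) (dm g) (dm h)"
  using skew by (simp add: left_skew_monoidal_def)

lemma lam_rho_unit: "lam U \<cdot> rho U = idn U"
  using skew by (simp add: left_skew_monoidal_def)

lemma triangle:
  "X \<in> Obj C \<Longrightarrow> Y \<in> Obj C \<Longrightarrow> (idn X \<otimes> lam Y) \<cdot> (alp X U Y \<cdot> (rho X \<otimes> idn Y)) = idn (tO X Y)"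
  using skew by (simp add: left_skew_monoidal_def)

lemma lam_alp: "X \<in> Obj C \<Longrightarrow> Y \<in> Obj C \<Longrightarrow> lam (tO X Y) \<cdot> alp U X Y = lam X \<otimes> idn Y"
  and alp_rho: "X \<in> Obj C \<Longrightarrow> Y \<in> Obj C \<Longrightarrow> alp X Y U \<cdot> rho (tO X Y) = idn X \<otimes> rho Y"
  using skew by (simp_all add: left_skew_monoidal_def)

lemma pentagon:
  "X \<in> Obj C \<Longrightarrow> Y \<in> Obj C \<Longrightarrow> Z \<in> Obj C \<Longrightarrow> W \<in> Obj C \<Longrightarrow>
   (idn X \<otimes> alp Y Z W) \<cdot> (alp X (tO Y Z) W \<cdot> (alp X Y Z \<otimes> idn W)) =
   alp X Y (tO Z W) \<cdot> alp (tO X Y) Z W"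
  using skew by (simp add: left_skew_monoidal_def)

end

section \<open>The skew monoidal structure on M/T\<close>

locale slice_construction =
  skew_monoidal_category C K + ofs_category C E M
  for C :: "('o, 'a) cat" and K :: "('o, 'a) skew" and E M :: "'a set" +
  fixes T :: 'o and eta mu q0 j :: 'a and qS mS :: "'o \<times> 'a \<Rightarrow> 'o \<times> 'a \<Rightarrow> 'a"
  assumes monoid: "monoid C K T eta mu"
    and closE: "\<forall>e\<in>E. \<forall>x\<in>Obj (slice C M T). TA K e (Idn C (fst x)) \<in> E"
    and q0: "q0 \<in> E" "Dom C q0 = UnO K"
    and j: "j \<in> M" "Dom C j = Cod C q0" "Cod C j = T"
    and eta_fact: "Cmp C j q0 = eta"
    and qS: "\<forall>x\<in>Obj (slice C M T). \<forall>y\<in>Obj (slice C M T).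
               qS x y \<in> E \<and> Dom C (qS x y) = TO K (fst x) (fst y)"
    and mS: "\<forall>x\<in>Obj (slice C M T). \<forall>y\<in>Obj (slice C M T).
               mS x y \<in> M \<and> Dom C (mS x y) = Cod C (qS x y) \<and> Cod C (mS x y) = T"
    and mu_fact: "\<forall>x\<in>Obj (slice C M T). \<forall>y\<in>Obj (slice C M T).
               Cmp C (mS x y) (qS x y) = Cmp C mu (TA K (snd x) (snd y))"
begin

abbreviation "S \<equiv> slice C M T"
abbreviation "SK \<equiv> slice_skew C K q0 j qS mS"

lemma T_obj [simp]: "T \<in> Obj C"
  and eta_arr [simp]: "eta \<in> Arr C" "dm eta = U" "cd eta = T"
  and mu_arr [simp]: "mu \<in> Arr C" "dm mu = tO T T" "cd mu = T"
  using monoid unfolding monoid_def hom_def by blast+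

lemma mu_eta_left: "mu \<cdot> (eta \<otimes> idn T) = lam T"
  and mu_eta_right: "mu \<cdot> ((idn T \<otimes> eta) \<cdot> rho T) = idn T"
  and mu_assoc: "mu \<cdot> (mu \<otimes> idn T) = mu \<cdot> ((idn T \<otimes> mu) \<cdot> alp T T T)"
  using monoid unfolding monoid_def by blast+

lemma unit_factor_simps [simp]: "q0 \<in> E" "dm q0 = U" "j \<in> M" "dm j = cd q0" "cd j = T"
  using q0 j by auto

lemma slice_obj_fst [simp]: "x \<in> Obj S \<Longrightarrow> fst x \<in> Obj C"
  and slice_obj_snd [simp]: "x \<in> Obj S \<Longrightarrow> snd x \<in> M" "x \<in> Obj S \<Longrightarrow> dm (snd x) = fst x"
    "x \<in> Obj S \<Longrightarrow> cd (snd x) = T"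
  by (simp_all add: slice_obj_iff)

declare slice_arr_iff [simp]

lemma qS_E [simp]: "x \<in> Obj S \<Longrightarrow> y \<in> Obj S \<Longrightarrow> qS x y \<in> E"
  and qS_dom [simp]: "x \<in> Obj S \<Longrightarrow> y \<in> Obj S \<Longrightarrow> dm (qS x y) = tO (fst x) (fst y)"
  and mS_M [simp]: "x \<in> Obj S \<Longrightarrow> y \<in> Obj S \<Longrightarrow> mS x y \<in> M"
  and mS_dom [simp]: "x \<in> Obj S \<Longrightarrow> y \<in> Obj S \<Longrightarrow> dm (mS x y) = cd (qS x y)"
  and mS_cod [simp]: "x \<in> Obj S \<Longrightarrow> y \<in> Obj S \<Longrightarrow> cd (mS x y) = T"
  using qS mS by simp_all

lemma mS_qS: "x \<in> Obj S \<Longrightarrow> y \<in> Obj S \<Longrightarrow> mS x y \<cdot> qS x y = mu \<cdot> (snd x \<otimes> snd y)"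
  using mu_fact by blast

lemma mS_qS_extend:
  "x \<in> Obj S \<Longrightarrow> y \<in> Obj S \<Longrightarrow> r \<in> Arr C \<Longrightarrow> cd r = tO (fst x) (fst y) \<Longrightarrow>
   mS x y \<cdot> (qS x y \<cdot> r) = mu \<cdot> ((snd x \<otimes> snd y) \<cdot> r)"
  by (simp add: comp_assoc[symmetric] mS_qS)

lemma E_tensor_idn: "e \<in> E \<Longrightarrow> x \<in> Obj S \<Longrightarrow> e \<otimes> idn (fst x) \<in> E"
  using closE by blast

(* In the notation of the paper: box x y is the object S boxdot S' over T, J is (J, j),
   box_arr x1 y1 x2 y2 f g is f boxdot g, and lam_box, rho_box, alp_box are the components of
   l, r, a.  lam_cover = q_{J,S} o (q (x) S) and alp_cover = q_{S boxdot S',S''} o (q_{S,S'} (x) S'')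
   are the E-maps along which l and a are defined as diagonals. *)

definition box :: "'o \<times> 'a \<Rightarrow> 'o \<times> 'a \<Rightarrow> 'o \<times> 'a" where
  "box x y = (cd (qS x y), mS x y)"

definition J :: "'o \<times> 'a" where
  "J = (cd q0, j)"

lemma box_obj [simp]: "x \<in> Obj S \<Longrightarrow> y \<in> Obj S \<Longrightarrow> box x y \<in> Obj S"
  unfolding slice_obj_iff[of "box x y"] by (simp add: box_def)

lemma box_fst [simp]: "fst (box x y) = cd (qS x y)"
  and box_snd [simp]: "snd (box x y) = mS x y"
  by (simp_all add: box_def)

lemma J_obj [simp]: "J \<in> Obj S"
  unfolding slice_obj_iff[of J] by (simp add: J_def)

lemma J_fst [simp]: "fst J = cd q0"
  and J_snd [simp]: "snd J = j"
  by (simp_all add: J_def)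

definition box_arr :: "'o \<times> 'a \<Rightarrow> 'o \<times> 'a \<Rightarrow> 'o \<times> 'a \<Rightarrow> 'o \<times> 'a \<Rightarrow> 'a \<Rightarrow> 'a \<Rightarrow> 'a" where
  "box_arr x1 y1 x2 y2 f g = diag (qS x1 y1) (mS x2 y2) (qS x2 y2 \<cdot> (f \<otimes> g)) (mS x1 y1)"

definition lam_cover :: "'o \<times> 'a \<Rightarrow> 'a" where
  "lam_cover x = qS J x \<cdot> (q0 \<otimes> idn (fst x))"

definition lam_box :: "'o \<times> 'a \<Rightarrow> 'a" where
  "lam_box x = diag (lam_cover x) (snd x) (lam (fst x)) (mS J x)"

definition rho_box :: "'o \<times> 'a \<Rightarrow> 'a" where
  "rho_box x = qS x J \<cdot> ((idn (fst x) \<otimes> q0) \<cdot> rho (fst x))"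

definition alp_cover :: "'o \<times> 'a \<Rightarrow> 'o \<times> 'a \<Rightarrow> 'o \<times> 'a \<Rightarrow> 'a" where
  "alp_cover x y z = qS (box x y) z \<cdot> (qS x y \<otimes> idn (fst z))"

definition alp_box :: "'o \<times> 'a \<Rightarrow> 'o \<times> 'a \<Rightarrow> 'o \<times> 'a \<Rightarrow> 'a" where
  "alp_box x y z = diag (alp_cover x y z) (mS x (box y z))
     (qS x (box y z) \<cdot> ((idn (fst x) \<otimes> qS y z) \<cdot> alp (fst x) (fst y) (fst z))) (mS (box x y) z)"

context
  fixes x1 y1 x2 y2 f g
  assumes f: "(x1, f, x2) \<in> Arr S" and g: "(y1, g, y2) \<in> Arr S"
begin

lemma box_arr_square: "mS x1 y1 \<cdot> qS x1 y1 = mS x2 y2 \<cdot> (qS x2 y2 \<cdot> (f \<otimes> g))"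
  using f g by (simp add: mS_qS mS_qS_extend tensor_comp)

lemma box_arr_arr [simp]: "box_arr x1 y1 x2 y2 f g \<in> Arr C"
  and box_arr_dom [simp]: "dm (box_arr x1 y1 x2 y2 f g) = cd (qS x1 y1)"
  and box_arr_cod [simp]: "cd (box_arr x1 y1 x2 y2 f g) = cd (qS x2 y2)"
  and box_arr_qS: "box_arr x1 y1 x2 y2 f g \<cdot> qS x1 y1 = qS x2 y2 \<cdot> (f \<otimes> g)"
  and mS_box_arr [simp]: "mS x2 y2 \<cdot> box_arr x1 y1 x2 y2 f g = mS x1 y1"
  unfolding box_arr_def
  using diag_props[of "qS x1 y1" "mS x2 y2" "qS x2 y2 \<cdot> (f \<otimes> g)" "mS x1 y1"] box_arr_square f g
  by simp_all

lemma box_arr_unique: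
  "d \<in> Arr C \<Longrightarrow> dm d = cd (qS x1 y1) \<Longrightarrow> cd d = cd (qS x2 y2) \<Longrightarrow>
   d \<cdot> qS x1 y1 = qS x2 y2 \<cdot> (f \<otimes> g) \<Longrightarrow> mS x2 y2 \<cdot> d = mS x1 y1 \<Longrightarrow> box_arr x1 y1 x2 y2 f g = d"
  unfolding box_arr_def by (rule diag_unique) (use f g box_arr_square in simp_all)

end

lemma lam_cover_E [simp]: "x \<in> Obj S \<Longrightarrow> lam_cover x \<in> E"
  and lam_cover_arr [simp]: "x \<in> Obj S \<Longrightarrow> lam_cover x \<in> Arr C"
  and lam_cover_dom [simp]: "x \<in> Obj S \<Longrightarrow> dm (lam_cover x) = tO U (fst x)"
  and lam_cover_cod [simp]: "x \<in> Obj S \<Longrightarrow> cd (lam_cover x) = cd (qS J x)"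
  unfolding lam_cover_def using E_tensor_idn[of q0 x] by simp_all

context
  fixes x assumes x: "x \<in> Obj S"
begin

lemma lam_box_square: "mS J x \<cdot> lam_cover x = snd x \<cdot> lam (fst x)"
proof -
  have "snd x \<cdot> lam (fst x) = lam T \<cdot> (idn U \<otimes> snd x)"
    using lam_natural[of "snd x"] x by simp
  also have "\<dots> = mu \<cdot> (eta \<otimes> snd x)"
    using x by (simp add: mu_eta_left[symmetric] comp_normalize)
  also have "\<dots> = mS J x \<cdot> lam_cover x"
    using x by (simp add: lam_cover_def mS_qS_extend comp_normalize eta_fact)
  finally show ?thesis
    by simp
qed

lemma lam_box_arr [simp]: "lam_box x \<in> Arr C"
  and lam_box_dom [simp]: "dm (lam_box x) = cd (qS J x)"
  and lam_box_cod [simp]: "cd (lam_box x) = fst x"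
  and lam_box_cover: "lam_box x \<cdot> lam_cover x = lam (fst x)"
  and snd_lam_box [simp]: "snd x \<cdot> lam_box x = mS J x"
  unfolding lam_box_def
  using diag_props[of "lam_cover x" "snd x" "lam (fst x)" "mS J x"] lam_box_square x
  by simp_all

lemma rho_box_arr [simp]: "rho_box x \<in> Arr C"
  and rho_box_dom [simp]: "dm (rho_box x) = fst x"
  and rho_box_cod [simp]: "cd (rho_box x) = cd (qS x J)"
  using x by (simp_all add: rho_box_def)

lemma mS_rho_box [simp]: "mS x J \<cdot> rho_box x = snd x"
proof -
  have "snd x = (mu \<cdot> ((idn T \<otimes> eta) \<cdot> rho T)) \<cdot> snd x"
    using x by (simp add: mu_eta_right)
  also have "\<dots> = mu \<cdot> ((idn T \<otimes> eta) \<cdot> (rho T \<cdot> snd x))"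
    using x by (simp add: comp_assoc)
  also have "\<dots> = mu \<cdot> ((idn T \<otimes> eta) \<cdot> ((snd x \<otimes> idn U) \<cdot> rho (fst x)))"
    using x rho_natural[of "snd x"] by simp
  also have "\<dots> = mS x J \<cdot> rho_box x"
    using x by (simp add: rho_box_def mS_qS_extend comp_normalize eta_fact)
  finally show ?thesis
    by simp
qed

end

context
  fixes x y z assumes xyz: "x \<in> Obj S" "y \<in> Obj S" "z \<in> Obj S"
begin

lemma alp_cover_E [simp]: "alp_cover x y z \<in> E"
  and alp_cover_arr [simp]: "alp_cover x y z \<in> Arr C"
  and alp_cover_dom [simp]: "dm (alp_cover x y z) = tO (tO (fst x) (fst y)) (fst z)"
  and alp_cover_cod [simp]: "cd (alp_cover x y z) = cd (qS (box x y) z)"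
  unfolding alp_cover_def using E_tensor_idn[of "qS x y" z] xyz by simp_all

lemma alp_box_square:
  "mS (box x y) z \<cdot> alp_cover x y z =
   mS x (box y z) \<cdot> (qS x (box y z) \<cdot> ((idn (fst x) \<otimes> qS y z) \<cdot> alp (fst x) (fst y) (fst z)))"
proof -
  have "mS (box x y) z \<cdot> alp_cover x y z = mu \<cdot> ((mu \<cdot> (snd x \<otimes> snd y)) \<otimes> snd z)"
    using xyz by (simp add: alp_cover_def mS_qS_extend comp_normalize mS_qS)
  also have "\<dots> = mu \<cdot> ((mu \<otimes> idn T) \<cdot> ((snd x \<otimes> snd y) \<otimes> snd z))"
    using xyz by (simp add: tensor_comp)
  also have "\<dots> = (mu \<cdot> (mu \<otimes> idn T)) \<cdot> ((snd x \<otimes> snd y) \<otimes> snd z)"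
    using xyz by (simp add: comp_assoc)
  also have "\<dots> = mu \<cdot> ((idn T \<otimes> mu) \<cdot> (alp T T T \<cdot> ((snd x \<otimes> snd y) \<otimes> snd z)))"
    using xyz by (simp add: mu_assoc comp_assoc)
  also have "\<dots> = mu \<cdot> ((idn T \<otimes> mu) \<cdot> ((snd x \<otimes> (snd y \<otimes> snd z)) \<cdot> alp (fst x) (fst y) (fst z)))"
    using xyz alp_natural[of "snd x" "snd y" "snd z"] by simp
  also have "\<dots> = mS x (box y z) \<cdot> (qS x (box y z) \<cdot> ((idn (fst x) \<otimes> qS y z) \<cdot> alp (fst x) (fst y) (fst z)))"
    using xyz by (simp add: mS_qS_extend comp_normalize mS_qS)
  finally show ?thesis .
qed

lemma alp_box_arr [simp]: "alp_box x y z \<in> Arr C"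
  and alp_box_dom [simp]: "dm (alp_box x y z) = cd (qS (box x y) z)"
  and alp_box_cod [simp]: "cd (alp_box x y z) = cd (qS x (box y z))"
  and alp_box_cover:
    "alp_box x y z \<cdot> alp_cover x y z = qS x (box y z) \<cdot> ((idn (fst x) \<otimes> qS y z) \<cdot> alp (fst x) (fst y) (fst z))"
  and mS_alp_box [simp]: "mS x (box y z) \<cdot> alp_box x y z = mS (box x y) z"
  unfolding alp_box_def
  using diag_props[of "alp_cover x y z" "mS x (box y z)"
      "qS x (box y z) \<cdot> ((idn (fst x) \<otimes> qS y z) \<cdot> alp (fst x) (fst y) (fst z))" "mS (box x y) z"]
    alp_box_square xyz
  by simp_all

end

lemma UnO_slice_skew: "UnO SK = J"
  by (simp add: slice_skew_def Let_def flip: J_def)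

lemma TO_slice_skew: "TO SK x y = box x y"
  by (simp add: slice_skew_def Let_def flip: box_def)

lemma TA_slice_skew:
  "x2 \<in> Obj S \<Longrightarrow> y2 \<in> Obj S \<Longrightarrow> TA SK (x1, f, x2) (y1, g, y2) = (box x1 y1, box_arr x1 y1 x2 y2 f g, box x2 y2)"
  by (simp add: slice_skew_def Let_def box_arr_def diag_def flip: box_def)

lemma Lam_slice_skew: "x \<in> Obj S \<Longrightarrow> Lam SK x = (box J x, lam_box x, x)"
  by (simp add: slice_skew_def Let_def lam_box_def diag_def lam_cover_def flip: J_def box_def)

lemma Rho_slice_skew: "Rho SK x = (x, rho_box x, box x J)"
  by (simp add: slice_skew_def Let_def rho_box_def flip: J_def box_def)

lemma Alp_slice_skew:
  "x \<in> Obj S \<Longrightarrow> y \<in> Obj S \<Longrightarrow> z \<in> Obj S \<Longrightarrow>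
   Alp SK x y z = (box (box x y) z, alp_box x y z, box x (box y z))"
  by (simp add: slice_skew_def Let_def alp_box_def diag_def alp_cover_def flip: box_def)

lemmas slice_skew_simps =
  UnO_slice_skew TO_slice_skew TA_slice_skew Lam_slice_skew Rho_slice_skew Alp_slice_skew

lemmas box_arr_qS_extend = comp_eq_extend[OF box_arr_qS]
lemmas mS_box_arr_extend = comp_eq_extend[OF mS_box_arr]
lemmas lam_box_cover_extend = comp_eq_extend[OF lam_box_cover]
lemmas snd_lam_box_extend = comp_eq_extend[OF snd_lam_box]
lemmas alp_box_cover_extend = comp_eq_extend[OF alp_box_cover]
lemmas mS_alp_box_extend = comp_eq_extend[OF mS_alp_box]

lemma box_arr_idn:
  "x \<in> Obj S \<Longrightarrow> y \<in> Obj S \<Longrightarrow> box_arr x y x y (idn (fst x)) (idn (fst y)) = idn (cd (qS x y))"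
  by (rule box_arr_unique) simp_all

lemma box_arr_comp:
  assumes f: "(x1, f, x2) \<in> Arr S" and f': "(x2, f', x3) \<in> Arr S"
    and g: "(y1, g, y2) \<in> Arr S" and g': "(y2, g', y3) \<in> Arr S"
  shows "box_arr x1 y1 x3 y3 (f' \<cdot> f) (g' \<cdot> g) = box_arr x2 y2 x3 y3 f' g' \<cdot> box_arr x1 y1 x2 y2 f g"
proof (rule box_arr_unique)
  show "(x1, f' \<cdot> f, x3) \<in> Arr S" "(y1, g' \<cdot> g, y3) \<in> Arr S"
    using slice_comp_arr f f' g g' by blast+
qed (use f f' g g' in \<open>simp_all add: comp_normalize box_arr_qS_extend mS_box_arr_extend box_arr_qS\<close>)

lemma lam_box_natural:
  assumes F: "(x, f, y) \<in> Arr S"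
  shows "f \<cdot> lam_box x = lam_box y \<cdot> box_arr J x J y (idn (fst J)) f"
proof -
  let ?t = "box_arr J x J y (idn (fst J)) f"
  have "(lam_box y \<cdot> ?t) \<cdot> lam_cover x = lam_box y \<cdot> (qS J y \<cdot> (q0 \<otimes> f))"
    using F by (simp add: lam_cover_def comp_normalize box_arr_qS_extend)
  also have "\<dots> = lam_box y \<cdot> (lam_cover y \<cdot> (idn U \<otimes> f))"
    using F by (simp add: lam_cover_def comp_normalize)
  also have "\<dots> = lam (fst y) \<cdot> (idn U \<otimes> f)"
    using F by (simp add: lam_box_cover_extend)
  also have "\<dots> = f \<cdot> lam (fst x)"
    using F lam_natural[of f] by simp
  also have "\<dots> = (f \<cdot> lam_box x) \<cdot> lam_cover x"
    using F by (simp add: comp_assoc lam_box_cover)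
  finally have E_side: "(f \<cdot> lam_box x) \<cdot> lam_cover x = (lam_box y \<cdot> ?t) \<cdot> lam_cover x" ..
  have M_side: "snd y \<cdot> (f \<cdot> lam_box x) = snd y \<cdot> (lam_box y \<cdot> ?t)"
    using F by (simp add: snd_lam_box_extend comp_assoc[symmetric])
  show ?thesis
    by (rule E_M_cancel[OF _ _ _ _ _ _ _ _ E_side M_side]) (use F in simp_all)
qed

lemma rho_box_natural:
  assumes F: "(x, f, y) \<in> Arr S"
  shows "rho_box y \<cdot> f = box_arr x J y J f (idn (fst J)) \<cdot> rho_box x"
proof -
  have "rho (fst y) \<cdot> f = (f \<otimes> idn U) \<cdot> rho (fst x)"
    using F rho_natural[of f] by simp
  then show ?thesis
    using F by (simp add: rho_box_def comp_normalize box_arr_qS_extend)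
qed

lemma lam_box_rho_box_unit: "lam_box J \<cdot> rho_box J = idn (cd q0)"
proof -
  have r: "rho (cd q0) \<cdot> q0 = (q0 \<otimes> idn U) \<cdot> rho U"
    using rho_natural[of q0] by simp
  have l: "q0 \<cdot> lam U = lam (cd q0) \<cdot> (idn U \<otimes> q0)"
    using lam_natural[of q0] by simp
  have "(lam_box J \<cdot> rho_box J) \<cdot> q0 = lam_box J \<cdot> (qS J J \<cdot> ((q0 \<otimes> q0) \<cdot> rho U))"
    using r by (simp add: rho_box_def comp_normalize)
  also have "\<dots> = lam_box J \<cdot> (lam_cover J \<cdot> ((idn U \<otimes> q0) \<cdot> rho U))"
    by (simp add: lam_cover_def comp_normalize)
  also have "\<dots> = lam (cd q0) \<cdot> ((idn U \<otimes> q0) \<cdot> rho U)"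
    by (simp add: lam_box_cover_extend)
  also have "\<dots> = q0 \<cdot> (lam U \<cdot> rho U)"
    using l by (simp add: comp_assoc[symmetric])
  also have "\<dots> = idn (cd q0) \<cdot> q0"
    by (simp add: lam_rho_unit)
  finally have E_side: "(lam_box J \<cdot> rho_box J) \<cdot> q0 = idn (cd q0) \<cdot> q0" .
  have M_side: "j \<cdot> (lam_box J \<cdot> rho_box J) = j \<cdot> idn (cd q0)"
    using snd_lam_box_extend[of J "rho_box J"] by simp
  show ?thesis
    by (rule E_M_cancel[OF _ _ _ _ _ _ _ _ E_side M_side]) simp_all
qed

lemma alp_box_natural:
  assumes F: "(x1, f, x2) \<in> Arr S" and G: "(y1, g, y2) \<in> Arr S" and H: "(z1, h, z2) \<in> Arr S"
  shows "alp_box x2 y2 z2 \<cdot> box_arr (box x1 y1) z1 (box x2 y2) z2 (box_arr x1 y1 x2 y2 f g) h =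
    box_arr x1 (box y1 z1) x2 (box y2 z2) f (box_arr y1 z1 y2 z2 g h) \<cdot> alp_box x1 y1 z1"
    (is "?l = ?r")
proof -
  have "?l \<cdot> alp_cover x1 y1 z1 = alp_box x2 y2 z2 \<cdot> (alp_cover x2 y2 z2 \<cdot> ((f \<otimes> g) \<otimes> h))"
    using F G H by (simp add: alp_cover_def comp_normalize box_arr_qS_extend box_arr_qS)
  also have "\<dots> = qS x2 (box y2 z2) \<cdot> ((idn (fst x2) \<otimes> qS y2 z2) \<cdot>
      (alp (fst x2) (fst y2) (fst z2) \<cdot> ((f \<otimes> g) \<otimes> h)))"
    using F G H by (simp add: alp_box_cover_extend comp_assoc)
  also have "\<dots> = qS x2 (box y2 z2) \<cdot> ((idn (fst x2) \<otimes> qS y2 z2) \<cdot>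
      ((f \<otimes> (g \<otimes> h)) \<cdot> alp (fst x1) (fst y1) (fst z1)))"
    using alp_natural[of f g h] F G H by simp
  also have "\<dots> = ?r \<cdot> alp_cover x1 y1 z1"
    using F G H by (simp add: comp_normalize alp_box_cover box_arr_qS_extend box_arr_qS)
  finally have E_side: "?l \<cdot> alp_cover x1 y1 z1 = ?r \<cdot> alp_cover x1 y1 z1" .
  have M_side: "mS x2 (box y2 z2) \<cdot> ?l = mS x2 (box y2 z2) \<cdot> ?r"
    using F G H by (simp add: mS_alp_box_extend mS_box_arr_extend)
  show ?thesis
    by (rule E_M_cancel[OF _ _ _ _ _ _ _ _ E_side M_side]) (use F G H in simp_all)
qed

context
  fixes X Y assumes XY: "X \<in> Obj S" "Y \<in> Obj S"
begin

lemma triangle_box: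
  "box_arr X (box J Y) X Y (idn (fst X)) (lam_box Y) \<cdot>
     (alp_box X J Y \<cdot> box_arr X Y (box X J) Y (rho_box X) (idn (fst Y))) = idn (cd (qS X Y))"
  (is "?L \<cdot> (alp_box X J Y \<cdot> ?R) = _")
proof -
  let ?X = "fst X" and ?Y = "fst Y"
  have alp_q0: "alp ?X (cd q0) ?Y \<cdot> ((idn ?X \<otimes> q0) \<otimes> idn ?Y) = (idn ?X \<otimes> (q0 \<otimes> idn ?Y)) \<cdot> alp ?X U ?Y"
    using alp_natural[of "idn ?X" q0 "idn ?Y"] XY by simp
  have split: "((idn ?X \<otimes> q0) \<cdot> rho ?X) \<otimes> idn ?Y = ((idn ?X \<otimes> q0) \<otimes> idn ?Y) \<cdot> (rho ?X \<otimes> idn ?Y)"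
    using XY by (simp add: tensor_comp)
  have "(?L \<cdot> (alp_box X J Y \<cdot> ?R)) \<cdot> qS X Y = ?L \<cdot> (alp_box X J Y \<cdot> (qS (box X J) Y \<cdot> (rho_box X \<otimes> idn ?Y)))"
    using XY by (simp add: comp_assoc box_arr_qS)
  also have "\<dots> = ?L \<cdot> (alp_box X J Y \<cdot> (alp_cover X J Y \<cdot> (((idn ?X \<otimes> q0) \<cdot> rho ?X) \<otimes> idn ?Y)))"
    using XY by (simp add: alp_cover_def rho_box_def comp_normalize)
  also have "\<dots> = ?L \<cdot> (qS X (box J Y) \<cdot> ((idn ?X \<otimes> qS J Y) \<cdot>
      (alp ?X (cd q0) ?Y \<cdot> (((idn ?X \<otimes> q0) \<cdot> rho ?X) \<otimes> idn ?Y))))"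
    using XY by (simp add: alp_box_cover_extend comp_assoc)
  also have "\<dots> = ?L \<cdot> (qS X (box J Y) \<cdot> ((idn ?X \<otimes> qS J Y) \<cdot>
      ((idn ?X \<otimes> (q0 \<otimes> idn ?Y)) \<cdot> (alp ?X U ?Y \<cdot> (rho ?X \<otimes> idn ?Y)))))"
    unfolding split using XY by (simp add: comp_eq_extend[OF alp_q0] comp_assoc)
  also have "\<dots> = qS X Y \<cdot> ((idn ?X \<otimes> (lam_box Y \<cdot> lam_cover Y)) \<cdot> (alp ?X U ?Y \<cdot> (rho ?X \<otimes> idn ?Y)))"
    using XY by (simp add: lam_cover_def comp_normalize box_arr_qS_extend)
  also have "\<dots> = idn (cd (qS X Y)) \<cdot> qS X Y"
    using XY by (simp add: lam_box_cover triangle)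
  finally have E_side: "(?L \<cdot> (alp_box X J Y \<cdot> ?R)) \<cdot> qS X Y = idn (cd (qS X Y)) \<cdot> qS X Y" .
  have M_side: "mS X Y \<cdot> (?L \<cdot> (alp_box X J Y \<cdot> ?R)) = mS X Y \<cdot> idn (cd (qS X Y))"
    using XY by (simp add: mS_alp_box_extend mS_box_arr_extend)
  show ?thesis
    by (rule E_M_cancel[OF _ _ _ _ _ _ _ _ E_side M_side]) (use XY in simp_all)
qed

lemma lam_box_alp_box:
  "lam_box (box X Y) \<cdot> alp_box J X Y = box_arr (box J X) Y X Y (lam_box X) (idn (fst Y))"
  (is "_ = ?R")
proof -
  let ?X = "fst X" and ?Y = "fst Y"
  let ?e = "alp_cover J X Y \<cdot> ((q0 \<otimes> idn ?X) \<otimes> idn ?Y)"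
  have cover_E: "?e \<in> E"
    using E_tensor_idn[OF E_tensor_idn[OF unit_factor_simps(1) XY(1)] XY(2)] XY by simp
  have alp_q0: "alp (cd q0) ?X ?Y \<cdot> ((q0 \<otimes> idn ?X) \<otimes> idn ?Y) = (q0 \<otimes> idn (tO ?X ?Y)) \<cdot> alp U ?X ?Y"
    using alp_natural[of q0 "idn ?X" "idn ?Y"] XY by simp
  have lam_qS: "qS X Y \<cdot> lam (tO ?X ?Y) = lam (cd (qS X Y)) \<cdot> (idn U \<otimes> qS X Y)"
    using lam_natural[of "qS X Y"] XY by simp
  have "(lam_box (box X Y) \<cdot> alp_box J X Y) \<cdot> ?e = lam_box (box X Y) \<cdot> (qS J (box X Y) \<cdot>
      ((idn (cd q0) \<otimes> qS X Y) \<cdot> (alp (cd q0) ?X ?Y \<cdot> ((q0 \<otimes> idn ?X) \<otimes> idn ?Y))))"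
    using XY by (simp add: comp_assoc alp_box_cover_extend)
  also have "\<dots> = lam_box (box X Y) \<cdot> (lam_cover (box X Y) \<cdot> ((idn U \<otimes> qS X Y) \<cdot> alp U ?X ?Y))"
    using XY by (simp add: alp_q0 lam_cover_def comp_normalize)
  also have "\<dots> = lam (cd (qS X Y)) \<cdot> ((idn U \<otimes> qS X Y) \<cdot> alp U ?X ?Y)"
    using XY by (simp add: lam_box_cover_extend)
  also have "\<dots> = qS X Y \<cdot> (lam (tO ?X ?Y) \<cdot> alp U ?X ?Y)"
    using XY lam_qS by (simp add: comp_assoc[symmetric])
  also have "\<dots> = qS X Y \<cdot> ((lam_box X \<cdot> lam_cover X) \<otimes> idn ?Y)"
    using XY by (simp add: lam_alp lam_box_cover)
  also have "\<dots> = ?R \<cdot> ?e"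
    using XY by (simp add: lam_cover_def alp_cover_def comp_normalize box_arr_qS_extend)
  finally have E_side: "(lam_box (box X Y) \<cdot> alp_box J X Y) \<cdot> ?e = ?R \<cdot> ?e" .
  have "mS X Y \<cdot> lam_box (box X Y) = mS J (box X Y)"
    using snd_lam_box[of "box X Y"] XY by simp
  then have M_side: "mS X Y \<cdot> (lam_box (box X Y) \<cdot> alp_box J X Y) = mS X Y \<cdot> ?R"
    using XY by (simp add: comp_eq_extend mS_box_arr)
  show ?thesis
    by (rule E_M_cancel[OF cover_E _ _ _ _ _ _ _ E_side M_side]) (use XY in simp_all)
qed

lemma alp_box_rho_box:
  "alp_box X Y J \<cdot> rho_box (box X Y) = box_arr X Y X (box Y J) (idn (fst X)) (rho_box Y)"
  (is "_ = ?R")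
proof -
  let ?X = "fst X" and ?Y = "fst Y"
  have rho_qS: "rho (cd (qS X Y)) \<cdot> qS X Y = (qS X Y \<otimes> idn U) \<cdot> rho (tO ?X ?Y)"
    using rho_natural[of "qS X Y"] XY by simp
  have alp_q0: "alp ?X ?Y (cd q0) \<cdot> (idn (tO ?X ?Y) \<otimes> q0) = (idn ?X \<otimes> (idn ?Y \<otimes> q0)) \<cdot> alp ?X ?Y U"
    using alp_natural[of "idn ?X" "idn ?Y" q0] XY by simp
  have "(alp_box X Y J \<cdot> rho_box (box X Y)) \<cdot> qS X Y = alp_box X Y J \<cdot>
      (qS (box X Y) J \<cdot> ((idn (cd (qS X Y)) \<otimes> q0) \<cdot> (rho (cd (qS X Y)) \<cdot> qS X Y)))"
    using XY by (simp add: rho_box_def comp_assoc)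
  also have "\<dots> = alp_box X Y J \<cdot> (alp_cover X Y J \<cdot> ((idn (tO ?X ?Y) \<otimes> q0) \<cdot> rho (tO ?X ?Y)))"
    using XY by (simp add: rho_qS alp_cover_def comp_normalize)
  also have "\<dots> = qS X (box Y J) \<cdot> ((idn ?X \<otimes> qS Y J) \<cdot>
      ((idn ?X \<otimes> (idn ?Y \<otimes> q0)) \<cdot> (alp ?X ?Y U \<cdot> rho (tO ?X ?Y))))"
    using XY by (simp add: alp_box_cover_extend comp_eq_extend[OF alp_q0] comp_assoc)
  also have "\<dots> = qS X (box Y J) \<cdot> (idn ?X \<otimes> rho_box Y)"
    using XY by (simp add: alp_rho rho_box_def comp_normalize)
  also have "\<dots> = ?R \<cdot> qS X Y"
    using XY by (simp add: box_arr_qS)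
  finally have E_side: "(alp_box X Y J \<cdot> rho_box (box X Y)) \<cdot> qS X Y = ?R \<cdot> qS X Y" .
  have "mS (box X Y) J \<cdot> rho_box (box X Y) = mS X Y"
    using mS_rho_box[of "box X Y"] XY by simp
  then have M_side: "mS X (box Y J) \<cdot> (alp_box X Y J \<cdot> rho_box (box X Y)) = mS X (box Y J) \<cdot> ?R"
    using XY by (simp add: mS_alp_box_extend mS_box_arr)
  show ?thesis
    by (rule E_M_cancel[OF _ _ _ _ _ _ _ _ E_side M_side]) (use XY in simp_all)
qed

end

context
  fixes X Y Z W assumes XYZW: "X \<in> Obj S" "Y \<in> Obj S" "Z \<in> Obj S" "W \<in> Obj S"
begin

definition pentagon_cover :: 'a where
  "pentagon_cover = qS (box (box X Y) Z) W \<cdot> (alp_cover X Y Z \<otimes> idn (fst W))"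

definition pentagon_image :: 'a where
  "pentagon_image = qS X (box Y (box Z W)) \<cdot> ((idn (fst X) \<otimes> qS Y (box Z W)) \<cdot>
     ((idn (fst X) \<otimes> (idn (fst Y) \<otimes> qS Z W)) \<cdot>
      (alp (fst X) (fst Y) (tO (fst Z) (fst W)) \<cdot> alp (tO (fst X) (fst Y)) (fst Z) (fst W))))"

lemma pentagon_lhs_cover:
  "(box_arr X (box (box Y Z) W) X (box Y (box Z W)) (idn (fst X)) (alp_box Y Z W) \<cdot>
    (alp_box X (box Y Z) W \<cdot> box_arr (box (box X Y) Z) W (box X (box Y Z)) W (alp_box X Y Z) (idn (fst W))))
   \<cdot> pentagon_cover = pentagon_image"
  (is "(?tA \<cdot> (alp_box X (box Y Z) W \<cdot> ?tB)) \<cdot> _ = _")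
proof -
  let ?X = "fst X" and ?Y = "fst Y" and ?Z = "fst Z" and ?W = "fst W"
  have split: "((idn ?X \<otimes> qS Y Z) \<cdot> alp ?X ?Y ?Z) \<otimes> idn ?W =
      ((idn ?X \<otimes> qS Y Z) \<otimes> idn ?W) \<cdot> (alp ?X ?Y ?Z \<otimes> idn ?W)"
    using XYZW by (simp add: tensor_comp)
  have alp_qS: "alp ?X (cd (qS Y Z)) ?W \<cdot> ((idn ?X \<otimes> qS Y Z) \<otimes> idn ?W) =
      (idn ?X \<otimes> (qS Y Z \<otimes> idn ?W)) \<cdot> alp ?X (tO ?Y ?Z) ?W"
    using alp_natural[of "idn ?X" "qS Y Z" "idn ?W"] XYZW by simp
  have "(?tA \<cdot> (alp_box X (box Y Z) W \<cdot> ?tB)) \<cdot> pentagon_cover = ?tA \<cdot> (alp_box X (box Y Z) W \<cdot>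
      (qS (box X (box Y Z)) W \<cdot> ((qS X (box Y Z) \<cdot> ((idn ?X \<otimes> qS Y Z) \<cdot> alp ?X ?Y ?Z)) \<otimes> idn ?W)))"
    using XYZW
    by (simp add: pentagon_cover_def comp_assoc box_arr_qS_extend tensor_comp tensor_comp_extend alp_box_cover)
  also have "\<dots> = ?tA \<cdot> (alp_box X (box Y Z) W \<cdot>
      (alp_cover X (box Y Z) W \<cdot> (((idn ?X \<otimes> qS Y Z) \<cdot> alp ?X ?Y ?Z) \<otimes> idn ?W)))"
    using XYZW by (simp add: alp_cover_def comp_normalize)
  also have "\<dots> = ?tA \<cdot> (qS X (box (box Y Z) W) \<cdot> ((idn ?X \<otimes> qS (box Y Z) W) \<cdot>
      (alp ?X (cd (qS Y Z)) ?W \<cdot> (((idn ?X \<otimes> qS Y Z) \<cdot> alp ?X ?Y ?Z) \<otimes> idn ?W))))"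
    using XYZW by (simp add: alp_box_cover_extend comp_assoc)
  also have "\<dots> = ?tA \<cdot> (qS X (box (box Y Z) W) \<cdot> ((idn ?X \<otimes> qS (box Y Z) W) \<cdot>
      ((idn ?X \<otimes> (qS Y Z \<otimes> idn ?W)) \<cdot> (alp ?X (tO ?Y ?Z) ?W \<cdot> (alp ?X ?Y ?Z \<otimes> idn ?W)))))"
    unfolding split using XYZW by (simp add: comp_eq_extend[OF alp_qS] comp_assoc)
  also have "\<dots> = ?tA \<cdot> (qS X (box (box Y Z) W) \<cdot> ((idn ?X \<otimes> alp_cover Y Z W) \<cdot>
      (alp ?X (tO ?Y ?Z) ?W \<cdot> (alp ?X ?Y ?Z \<otimes> idn ?W))))"
    using XYZW by (simp add: alp_cover_def comp_normalize)
  also have "\<dots> = qS X (box Y (box Z W)) \<cdot>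
      ((idn ?X \<otimes> (qS Y (box Z W) \<cdot> ((idn ?Y \<otimes> qS Z W) \<cdot> alp ?Y ?Z ?W))) \<cdot>
      (alp ?X (tO ?Y ?Z) ?W \<cdot> (alp ?X ?Y ?Z \<otimes> idn ?W)))"
    using XYZW by (simp add: box_arr_qS_extend tensor_comp tensor_comp_extend comp_assoc alp_box_cover)
  also have "\<dots> = pentagon_image"
    using XYZW by (simp add: pentagon_image_def comp_normalize pentagon[symmetric])
  finally show ?thesis .
qed

lemma pentagon_rhs_cover:
  "(alp_box X Y (box Z W) \<cdot> alp_box (box X Y) Z W) \<cdot> pentagon_cover = pentagon_image"
proof -
  let ?X = "fst X" and ?Y = "fst Y" and ?Z = "fst Z" and ?W = "fst W"
  have alp_qS_left: "alp (cd (qS X Y)) ?Z ?W \<cdot> ((qS X Y \<otimes> idn ?Z) \<otimes> idn ?W) =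
      (qS X Y \<otimes> idn (tO ?Z ?W)) \<cdot> alp (tO ?X ?Y) ?Z ?W"
    using alp_natural[of "qS X Y" "idn ?Z" "idn ?W"] XYZW by simp
  have alp_qS_right: "alp ?X ?Y (cd (qS Z W)) \<cdot> (idn (tO ?X ?Y) \<otimes> qS Z W) =
      (idn ?X \<otimes> (idn ?Y \<otimes> qS Z W)) \<cdot> alp ?X ?Y (tO ?Z ?W)"
    using alp_natural[of "idn ?X" "idn ?Y" "qS Z W"] XYZW by simp
  have "pentagon_cover = alp_cover (box X Y) Z W \<cdot> ((qS X Y \<otimes> idn ?Z) \<otimes> idn ?W)"
    using XYZW by (simp add: pentagon_cover_def alp_cover_def comp_normalize)
  then have "(alp_box X Y (box Z W) \<cdot> alp_box (box X Y) Z W) \<cdot> pentagon_cover =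
      alp_box X Y (box Z W) \<cdot> (qS (box X Y) (box Z W) \<cdot> ((idn (cd (qS X Y)) \<otimes> qS Z W) \<cdot>
      (alp (cd (qS X Y)) ?Z ?W \<cdot> ((qS X Y \<otimes> idn ?Z) \<otimes> idn ?W))))"
    using XYZW by (simp add: comp_assoc alp_box_cover_extend)
  also have "\<dots> = alp_box X Y (box Z W) \<cdot>
      (alp_cover X Y (box Z W) \<cdot> ((idn (tO ?X ?Y) \<otimes> qS Z W) \<cdot> alp (tO ?X ?Y) ?Z ?W))"
    using XYZW by (simp add: alp_qS_left alp_cover_def comp_normalize)
  also have "\<dots> = qS X (box Y (box Z W)) \<cdot> ((idn ?X \<otimes> qS Y (box Z W)) \<cdot>
      (alp ?X ?Y (cd (qS Z W)) \<cdot> ((idn (tO ?X ?Y) \<otimes> qS Z W) \<cdot> alp (tO ?X ?Y) ?Z ?W)))"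
    using XYZW by (simp add: alp_box_cover_extend comp_assoc)
  also have "\<dots> = pentagon_image"
    using XYZW by (simp add: pentagon_image_def comp_eq_extend[OF alp_qS_right] comp_assoc)
  finally show ?thesis .
qed

lemma pentagon_box:
  "box_arr X (box (box Y Z) W) X (box Y (box Z W)) (idn (fst X)) (alp_box Y Z W) \<cdot>
    (alp_box X (box Y Z) W \<cdot> box_arr (box (box X Y) Z) W (box X (box Y Z)) W (alp_box X Y Z) (idn (fst W)))
   = alp_box X Y (box Z W) \<cdot> alp_box (box X Y) Z W"
  (is "?l = ?r")
proof -
  have cover_E: "pentagon_cover \<in> E"
    using E_tensor_idn[OF alp_cover_E[OF XYZW(1-3)] XYZW(4)] XYZW by (simp add: pentagon_cover_def)
  have E_side: "?l \<cdot> pentagon_cover = ?r \<cdot> pentagon_cover"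
    using pentagon_lhs_cover pentagon_rhs_cover by simp
  have M_side: "mS X (box Y (box Z W)) \<cdot> ?l = mS X (box Y (box Z W)) \<cdot> ?r"
    using XYZW by (simp add: mS_box_arr_extend mS_alp_box_extend mS_box_arr mS_alp_box)
  show ?thesis
    by (rule E_M_cancel[OF cover_E _ _ _ _ _ _ _ E_side M_side])
      (use XYZW in \<open>simp_all add: pentagon_cover_def\<close>)
qed

end

lemma left_skew_monoidal_slice: "left_skew_monoidal S SK"
  \<comment> \<open>The two naturality laws are used right to left: their left-hand sides do not determine y.\<close>
  unfolding left_skew_monoidal_def ball_slice_arr hom_def
  by (intro conjI allI ballI impI)
    (simp_all add: slice_skew_simps category_slice box_arr_idn box_arr_comp
      lam_box_natural[unfolded J_fst, symmetric] rho_box_natural[unfolded J_fst, symmetric]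
      alp_box_natural lam_box_rho_box_unit triangle_box lam_box_alp_box alp_box_rho_box pentagon_box)

lemma iso_Lam_slice:
  assumes x: "x \<in> Obj S" and "iso C (lam (fst x))"
  shows "iso S (Lam SK x)"
proof -
  obtain g where g: "g \<in> Arr C" "dm g = fst x" "cd g = tO U (fst x)"
      "g \<cdot> lam (fst x) = idn (tO U (fst x))" "lam (fst x) \<cdot> g = idn (fst x)"
    using isoE[OF \<open>iso C (lam (fst x))\<close>] x by auto
  have "iso C g"
    using g x by (intro isoI[of g "lam (fst x)"]) simp_all
  then have section_E: "lam_cover x \<cdot> g \<in> E"
    using g x by (simp add: iso_in_E)
  have "lam_box x \<in> M"
    using M_right_cancel[of "snd x" "mS J x" "lam_box x"] x by simp
  moreover have "lam_box x \<cdot> (lam_cover x \<cdot> g) = idn (fst x)"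
    using g x by (simp add: comp_assoc[symmetric] lam_box_cover)
  ultimately have "iso C (lam_box x)"
    using M_iso_if_E_section[OF section_E] g x by simp
  then show ?thesis
    using iso_slice[of "box J x" "lam_box x" x] x by (simp add: Lam_slice_skew)
qed

lemma left_normal_slice:
  "\<forall>X\<in>Obj C. iso C (lam X) \<Longrightarrow> \<forall>x\<in>Obj S. iso S (Lam SK x)"
  by (simp add: iso_Lam_slice)

context
  assumes E_idn_tensor: "\<forall>e\<in>E. \<forall>x\<in>Obj S. idn (fst x) \<otimes> e \<in> E"
begin

lemma iso_Rho_slice:
  assumes x: "x \<in> Obj S" and "iso C (rho (fst x))"
  shows "iso S (Rho SK x)"
proof -
  have "rho_box x \<in> E"
    using E_idn_tensor iso_in_E[OF \<open>iso C (rho (fst x))\<close>] x by (simp add: rho_box_def)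
  moreover have "rho_box x \<in> M"
    using M_right_cancel[of "mS x J" "snd x" "rho_box x"] x by simp
  ultimately have "iso C (rho_box x)"
    by (rule iso_if_E_M)
  then show ?thesis
    using iso_slice[of x "rho_box x" "box x J"] x by (simp add: Rho_slice_skew)
qed

lemma iso_Alp_slice:
  assumes xyz: "x \<in> Obj S" "y \<in> Obj S" "z \<in> Obj S" and "iso C (alp (fst x) (fst y) (fst z))"
  shows "iso S (Alp SK x y z)"
proof -
  have "alp_box x y z \<cdot> alp_cover x y z \<in> E"
    using E_idn_tensor iso_in_E[OF \<open>iso C (alp (fst x) (fst y) (fst z))\<close>] xyz
    by (simp add: alp_box_cover)
  then have "alp_box x y z \<in> E"
    using E_left_cancel[OF alp_cover_E[OF xyz] alp_box_arr[OF xyz]] xyz by simp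
  moreover have "alp_box x y z \<in> M"
    by (rule M_right_cancel[of "mS x (box y z)" "mS (box x y) z"]) (use xyz in simp_all)
  ultimately have "iso C (alp_box x y z)"
    by (rule iso_if_E_M)
  then show ?thesis
    using iso_slice[of "box (box x y) z" "alp_box x y z" "box x (box y z)"] xyz
    by (simp add: Alp_slice_skew)
qed

lemma monoidal_slice: "monoidal C K \<Longrightarrow> monoidal S SK"
  unfolding monoidal_def
  by (simp add: left_skew_monoidal_slice iso_Lam_slice iso_Rho_slice iso_Alp_slice)

end

end

theorem theorem3p9:
  fixes C :: "('o, 'a) cat" and K :: "('o, 'a) skew"
    and T :: 'o and eta mu :: 'a and E M :: "'a set"
    and q0 j :: 'a and qS mS :: "'o \<times> 'a \<Rightarrow> 'o \<times> 'a \<Rightarrow> 'a"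
  assumes skew: "left_skew_monoidal C K"
    and mon: "monoid C K T eta mu"
    and fs: "ofs C E M"
    and closE: "\<forall>e\<in>E. \<forall>x\<in>Obj (slice C M T). TA K e (Idn C (fst x)) \<in> E"
    and q0: "q0 \<in> E" "Dom C q0 = UnO K"
    and j: "j \<in> M" "Dom C j = Cod C q0" "Cod C j = T"
    and eta_fact: "Cmp C j q0 = eta"
    and qS: "\<forall>x\<in>Obj (slice C M T). \<forall>y\<in>Obj (slice C M T).
               qS x y \<in> E \<and> Dom C (qS x y) = TO K (fst x) (fst y)"
    and mS: "\<forall>x\<in>Obj (slice C M T). \<forall>y\<in>Obj (slice C M T).
               mS x y \<in> M \<and> Dom C (mS x y) = Cod C (qS x y) \<and> Cod C (mS x y) = T"
    and mu_fact: "\<forall>x\<in>Obj (slice C M T). \<forall>y\<in>Obj (slice C M T).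
               Cmp C (mS x y) (qS x y) = Cmp C mu (TA K (snd x) (snd y))"
  shows "left_skew_monoidal (slice C M T) (slice_skew C K q0 j qS mS) \<and>
         ((\<forall>X\<in>Obj C. iso C (Lam K X)) \<longrightarrow>
            (\<forall>x\<in>Obj (slice C M T). iso (slice C M T) (Lam (slice_skew C K q0 j qS mS) x))) \<and>
         ((\<forall>e\<in>E. \<forall>x\<in>Obj (slice C M T). TA K (Idn C (fst x)) e \<in> E) \<and> monoidal C K \<longrightarrow>
            monoidal (slice C M T) (slice_skew C K q0 j qS mS))"
proof -
  have "category C"
    using skew by (simp add: left_skew_monoidal_def)
  interpret slice_construction C K E M T eta mu q0 j qS mS
    by unfold_locales (fact \<open>category C\<close> assms)+
  show ?thesis
    using left_skew_monoidal_slice left_normal_slice monoidal_slice by blast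
qed

end
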